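(* Let $P$ be any poset on $\{1,2,\ldots,n\}$ and $k$ any field. Let $S=k[U_J]_{J\in\mathcal{J}_{\mathrm{conn}}(P)}$ be the polynomial ring with one variable for each nonempty connected order ideal of $P$, and let $\varphi:S\to R_P$ be the $k$-algebra map $U_J\mapsto \mathbf{x}^J:=\prod_{j\in J}x_j$. Then $\varphi$ is surjective, so $0\to I_P\to S\xrightarrow{\varphi} R_P\to 0$ is a presentation of $R_P$ with $I_P=\ker\varphi$, and this presentation is minimal; moreover $I_P$ has a minimal generating set indexed by $\Pi(P)$, consisting of the binomials $$\mathrm{syz}_{J_1,J_2}:=U_{J_1}U_{J_2}-U_{J_1\cup J_2}\cdot U_{J^{(1)}}U_{J^{(2)}}\cdots U_{J^{(t)}},\qquad \{J_1,J_2\}\in\Pi(P),$$ where $J^{(1)},\ldots,J^{(t)}$ are the connected components (i.e. the vertex sets of the connected components of the restricted Hasse diagram) of $J_1\cap J_2$.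
   Context: All posets are finite. A weak $P$-partition of a poset $P$ on $\{1,\ldots,n\}$ is a map $f:\{1,\ldots,n\}\to\mathbb{N}=\{0,1,2,\ldots\}$ with $f(i)\ge f(j)$ whenever $i<_P j$. $R_P$ is the subalgebra of $k[x_1,\ldots,x_n]$ spanned $k$-linearly by the monomials $\mathbf{x}^f=x_1^{f(1)}\cdots x_n^{f(n)}$ for $f$ a weak $P$-partition. An order ideal of $P$ is a subset $I$ with $p\le_P i\in I\Rightarrow p\in I$. A connected order ideal is a nonempty order ideal $J$ whose induced Hasse diagram (the Hasse diagram of $P$ restricted to $J$) is connected; $\mathcal{J}_{\mathrm{conn}}(P)$ is the set of these. Two connected order ideals intersect trivially if they are disjoint or nested (one contains the other), and nontrivially otherwise. $\Pi(P)$ is the set of unordered pairs $\{J_1,J_2\}$ of connected order ideals intersecting nontrivially. *)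

theory Defs
  imports Main "HOL-Library.Poly_Mapping"
begin

text \<open>Posets on {1..n} are given as relations r with partial_order_on {1..n} r.\<close>

type_synonym ('v, 'k) mpoly = "('v \<Rightarrow>\<^sub>0 nat) \<Rightarrow>\<^sub>0 'k"

definition strict_lt :: "nat rel \<Rightarrow> nat \<Rightarrow> nat \<Rightarrow> bool" where
  "strict_lt r i j \<longleftrightarrow> (i, j) \<in> r \<and> i \<noteq> j"

definition covers :: "nat rel \<Rightarrow> nat \<Rightarrow> nat \<Rightarrow> bool" where
  "covers r i j \<longleftrightarrow> strict_lt r i j \<and> \<not> (\<exists>k. strict_lt r i k \<and> strict_lt r k j)"

definition hasse_adj :: "nat rel \<Rightarrow> nat set \<Rightarrow> nat \<Rightarrow> nat \<Rightarrow> bool" where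
  "hasse_adj r J i j \<longleftrightarrow> i \<in> J \<and> j \<in> J \<and> (covers r i j \<or> covers r j i)"

definition hasse_conn :: "nat rel \<Rightarrow> nat set \<Rightarrow> nat \<Rightarrow> nat \<Rightarrow> bool" where
  "hasse_conn r J = (hasse_adj r J)\<^sup>*\<^sup>*"

definition hasse_components :: "nat rel \<Rightarrow> nat set \<Rightarrow> nat set set" where
  "hasse_components r J = {{y \<in> J. hasse_conn r J x y} | x. x \<in> J}"

definition order_ideal :: "nat \<Rightarrow> nat rel \<Rightarrow> nat set \<Rightarrow> bool" where
  "order_ideal n r I \<longleftrightarrow> I \<subseteq> {1..n} \<and> (\<forall>p i. i \<in> I \<and> (p, i) \<in> r \<longrightarrow> p \<in> I)"

definition conn_ideals :: "nat \<Rightarrow> nat rel \<Rightarrow> nat set set" where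
  "conn_ideals n r = {J. order_ideal n r J \<and> J \<noteq> {} \<and>
                         (\<forall>x\<in>J. \<forall>y\<in>J. hasse_conn r J x y)}"

definition intersect_nontrivially :: "nat set \<Rightarrow> nat set \<Rightarrow> bool" where
  "intersect_nontrivially A B \<longleftrightarrow> A \<inter> B \<noteq> {} \<and> \<not> A \<subseteq> B \<and> \<not> B \<subseteq> A"

definition Pi_pairs :: "nat \<Rightarrow> nat rel \<Rightarrow> nat set set set" where
  "Pi_pairs n r = {{J1, J2} | J1 J2. J1 \<in> conn_ideals n r \<and> J2 \<in> conn_ideals n r
                                      \<and> intersect_nontrivially J1 J2}"

definition weak_P_partition :: "nat \<Rightarrow> nat rel \<Rightarrow> (nat \<Rightarrow>\<^sub>0 nat) \<Rightarrow> bool" where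
  "weak_P_partition n r f \<longleftrightarrow> Poly_Mapping.keys f \<subseteq> {1..n} \<and>
     (\<forall>i j. strict_lt r i j \<longrightarrow> Poly_Mapping.lookup f i \<ge> Poly_Mapping.lookup f j)"

definition R_P :: "nat \<Rightarrow> nat rel \<Rightarrow> (nat, 'k::field) mpoly set" where
  "R_P n r = {(\<Sum>f\<in>F. Poly_Mapping.single f (c f)) | F c.
                finite F \<and> F \<subseteq> {f. weak_P_partition n r f}}"

text \<open>Polynomial ring S = k[U_J], J connected order ideal: polynomials in variables
  indexed by sets, involving only variables U_J with J in conn_ideals.\<close>
definition S_ring :: "nat \<Rightarrow> nat rel \<Rightarrow> (nat set, 'k::field) mpoly set" where
  "S_ring n r = {p. \<forall>m \<in> Poly_Mapping.keys p. Poly_Mapping.keys m \<subseteq> conn_ideals n r}"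

definition Uvar :: "nat set \<Rightarrow> (nat set, 'k::field) mpoly" where
  "Uvar J = Poly_Mapping.single (Poly_Mapping.single J 1) 1"

definition xmon :: "nat set \<Rightarrow> (nat, 'k::field) mpoly" where
  "xmon J = Poly_Mapping.single (\<Sum>j\<in>J. Poly_Mapping.single j 1) 1"

definition phi :: "(nat set, 'k::field) mpoly \<Rightarrow> (nat, 'k) mpoly" where
  "phi p = (\<Sum>m\<in>Poly_Mapping.keys p. Poly_Mapping.single 0 (Poly_Mapping.lookup p m) *
              (\<Prod>J\<in>Poly_Mapping.keys m. xmon J ^ Poly_Mapping.lookup m J))"

definition I_P :: "nat \<Rightarrow> nat rel \<Rightarrow> (nat set, 'k::field) mpoly set" where
  "I_P n r = {p \<in> S_ring n r. phi p = 0}"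

definition ideal_gen_S :: "nat \<Rightarrow> nat rel \<Rightarrow> (nat set, 'k::field) mpoly set \<Rightarrow> (nat set, 'k) mpoly set" where
  "ideal_gen_S n r G = {(\<Sum>g\<in>F. c g * g) | F c. finite F \<and> F \<subseteq> G \<and> (\<forall>g\<in>F. c g \<in> S_ring n r)}"

definition minimal_gen_set :: "nat \<Rightarrow> nat rel \<Rightarrow> (nat set, 'k::field) mpoly set \<Rightarrow> (nat set, 'k) mpoly set \<Rightarrow> bool" where
  "minimal_gen_set n r G I \<longleftrightarrow> G \<subseteq> I \<and> ideal_gen_S n r G = I \<and>
      (\<forall>G'. G' \<subset> G \<longrightarrow> ideal_gen_S n r G' \<noteq> I)"

definition syz :: "nat rel \<Rightarrow> nat set \<Rightarrow> nat set \<Rightarrow> (nat set, 'k::field) mpoly" where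
  "syz r J1 J2 = Uvar J1 * Uvar J2 -
      Uvar (J1 \<union> J2) * (\<Prod>C\<in>hasse_components r (J1 \<inter> J2). Uvar C)"

definition syz_pair :: "nat rel \<Rightarrow> nat set set \<Rightarrow> (nat set, 'k::field) mpoly" where
  "syz_pair r p = (SOME q. \<exists>J1 J2. p = {J1, J2} \<and> q = syz r J1 J2)"

text \<open>Minimality of the presentation: I_P \<subseteq> m^2, m the ideal generated by the
  variables U_J, i.e. no element of I_P has a term of total degree < 2.\<close>
definition total_deg :: "('v \<Rightarrow>\<^sub>0 nat) \<Rightarrow> nat" where
  "total_deg m = (\<Sum>v\<in>Poly_Mapping.keys m. Poly_Mapping.lookup m v)"

end

theory Submission
  imports Defs
begin

text \<open>Write phi (U^m) = x^(phi_exp m), where phi_exp m = \<Sum>_J m_J \<cdot> 1_J.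
  Surjectivity: a nonzero weak P-partition f splits as f' + 1_D, where D is a Hasse component
  of the support of f; D is a connected order ideal and f' is again a weak P-partition.

  Kernel: call a monomial laminar if its ideals pairwise intersect trivially. A syzygy rewrites
  U_A U_B with A, B intersecting nontrivially into U_{A \<union> B} \<Prod> U_C, which keeps phi_exp and
  strictly raises the bounded potential \<Sum>_J m_J 2^|J|; so every monomial is congruent modulo the
  syzygies to a laminar one. Laminar monomials are determined by their image, since the maximal
  ideal of m through a point x is the Hasse component of x in the support of phi_exp m. Hence an
  element of the kernel is congruent to a combination of distinct laminar monomials with zero
  image, i.e. to 0.

  Minimality: the kernel has no terms of degree below 2, and the degree-2 monomial U_A U_B occurs
  in syz_{A,B} and in no other syzygy, so it cannot be produced without syz_{A,B}.\<close>

abbreviation lookup :: "('a \<Rightarrow>\<^sub>0 'b::zero) \<Rightarrow> 'a \<Rightarrow> 'b" where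
  "lookup \<equiv> Poly_Mapping.lookup"

abbreviation keys :: "('a \<Rightarrow>\<^sub>0 'b::zero) \<Rightarrow> 'a set" where
  "keys \<equiv> Poly_Mapping.keys"

abbreviation single :: "'a \<Rightarrow> 'b \<Rightarrow> ('a \<Rightarrow>\<^sub>0 'b::zero)" where
  "single \<equiv> Poly_Mapping.single"

section \<open>The map phi on exponents\<close>

lemma sum_single_lookup_superset:
  assumes "finite A" "keys p \<subseteq> A"
  shows "(\<Sum>m\<in>A. single m (lookup p m)) = p"
proof -
  have "(\<Sum>m\<in>A. single m (lookup p m)) = (\<Sum>m\<in>keys p. single m (lookup p m))"
    by (rule sum.mono_neutral_right) (use assms in \<open>auto simp: in_keys_iff\<close>)
  also have "\<dots> = p"
    by (rule poly_mapping_eqI) (simp add: lookup_sum lookup_single when_def in_keys_iff)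
  finally show ?thesis .
qed

lemma sum_single_lookup: "(\<Sum>m\<in>keys p. single m (lookup p m)) = p"
  by (rule sum_single_lookup_superset) auto

lemma prod_single_one: "(\<Prod>x\<in>A. single (f x) (1::'a::comm_semiring_1)) = single (\<Sum>x\<in>A. f x) 1"
  by (induction A rule: infinite_finite_induct) (simp_all add: mult_single)

definition indicator_pm :: "nat set \<Rightarrow> nat \<Rightarrow> (nat \<Rightarrow>\<^sub>0 nat)" where
  "indicator_pm J k = (\<Sum>j\<in>J. single j k)"

lemma lookup_indicator_pm: "lookup (indicator_pm J k) i = (if finite J \<and> i \<in> J then k else 0)"
  by (cases "finite J") (simp_all add: indicator_pm_def lookup_sum lookup_single when_def sum.delta)

lemma indicator_pm_add: "indicator_pm J (a + b) = indicator_pm J a + indicator_pm J b"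
  by (simp add: indicator_pm_def single_add sum.distrib)

lemma indicator_pm_0 [simp]: "indicator_pm J 0 = 0"
  by (simp add: indicator_pm_def)

lemma xmon_power: "(xmon J :: (nat, 'k::field) mpoly) ^ k = single (indicator_pm J k) 1"
proof (induction k)
  case (Suc k)
  then show ?case
    using indicator_pm_add[of J 1 k] by (simp add: xmon_def mult_single indicator_pm_def)
qed simp

definition phi_exp :: "(nat set \<Rightarrow>\<^sub>0 nat) \<Rightarrow> (nat \<Rightarrow>\<^sub>0 nat)" where
  "phi_exp m = (\<Sum>J\<in>keys m. indicator_pm J (lookup m J))"

lemma phi_eq_sum_single:
  "phi (p :: (nat set, 'k::field) mpoly) = (\<Sum>m\<in>keys p. single (phi_exp m) (lookup p m))"
  unfolding phi_def
proof (rule sum.cong[OF refl])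
  fix m
  have "(\<Prod>J\<in>keys m. (xmon J :: (nat, 'k) mpoly) ^ lookup m J) = single (phi_exp m) 1"
    by (simp add: xmon_power prod_single_one phi_exp_def)
  then show "single 0 (lookup p m) * (\<Prod>J\<in>keys m. (xmon J :: (nat, 'k) mpoly) ^ lookup m J)
      = single (phi_exp m) (lookup p m)"
    by (simp add: mult_single)
qed

lemma phi_eq_sum_single_superset:
  assumes "finite A" "keys p \<subseteq> A"
  shows "phi p = (\<Sum>m\<in>A. single (phi_exp m) (lookup p m))"
  unfolding phi_eq_sum_single
  by (rule sum.mono_neutral_left) (use assms in \<open>auto simp: in_keys_iff\<close>)

lemma phi_single: "phi (single m c) = single (phi_exp m) c"
  by (simp add: phi_eq_sum_single)

lemma phi_zero [simp]: "phi 0 = 0"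
  by (simp add: phi_eq_sum_single)

lemma phi_add: "phi (p + q) = phi p + phi q"
proof -
  have fin: "finite (keys p \<union> keys q)" by simp
  show ?thesis
    unfolding phi_eq_sum_single_superset[OF fin keys_add]
      phi_eq_sum_single_superset[OF fin Un_upper1] phi_eq_sum_single_superset[OF fin Un_upper2]
    by (simp add: lookup_add single_add sum.distrib)
qed

lemma phi_uminus: "phi (- p) = - phi p"
  by (simp add: phi_eq_sum_single single_uminus sum_negf)

lemma phi_diff: "phi (p - q) = phi p - phi q"
  using phi_add[of p "- q"] by (simp add: phi_uminus)

lemma phi_sum: "phi (sum f A) = (\<Sum>x\<in>A. phi (f x))"
  by (induction A rule: infinite_finite_induct) (simp_all add: phi_add)

lemma lookup_phi: "lookup (phi p) e = (\<Sum>m\<in>keys p. if phi_exp m = e then lookup p m else 0)"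
  by (simp add: phi_eq_sum_single lookup_sum lookup_single when_def)

lemma lookup_phi_exp_superset:
  assumes "finite A" "keys m \<subseteq> A"
  shows "lookup (phi_exp m) i = (\<Sum>J\<in>A. if finite J \<and> i \<in> J then lookup m J else 0)"
proof -
  have "lookup (phi_exp m) i = (\<Sum>J\<in>keys m. if finite J \<and> i \<in> J then lookup m J else 0)"
    by (simp add: phi_exp_def lookup_sum lookup_indicator_pm)
  also have "\<dots> = (\<Sum>J\<in>A. if finite J \<and> i \<in> J then lookup m J else 0)"
    by (rule sum.mono_neutral_left) (use assms in \<open>auto simp: in_keys_iff\<close>)
  finally show ?thesis .
qed

lemma lookup_phi_exp:
  "lookup (phi_exp m) i = (\<Sum>J\<in>keys m. if finite J \<and> i \<in> J then lookup m J else 0)"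
  by (rule lookup_phi_exp_superset) auto

lemma phi_exp_0 [simp]: "phi_exp 0 = 0"
  by (simp add: phi_exp_def)

lemma phi_exp_single: "phi_exp (single J k) = indicator_pm J k"
  by (simp add: phi_exp_def)

lemma phi_exp_add: "phi_exp (a + b) = phi_exp a + phi_exp b"
proof (rule poly_mapping_eqI)
  fix i
  have fin: "finite (keys a \<union> keys b)" by simp
  show "lookup (phi_exp (a + b)) i = lookup (phi_exp a + phi_exp b) i"
    by (auto simp: lookup_add lookup_phi_exp_superset[OF fin keys_add]
        lookup_phi_exp_superset[OF fin] sum.distrib[symmetric] intro!: sum.cong)
qed

lemma phi_exp_sum: "phi_exp (sum f A) = (\<Sum>x\<in>A. phi_exp (f x))"
  by (induction A rule: infinite_finite_induct) (simp_all add: phi_exp_add)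

lemma phi_mult: "phi (p * q) = phi p * phi q"
proof -
  have "p * q = (\<Sum>a\<in>keys p. \<Sum>b\<in>keys q. single (a + b) (lookup p a * lookup q b))"
    by (subst (1 2) sum_single_lookup[symmetric]) (simp add: sum_product mult_single)
  then have "phi (p * q)
      = (\<Sum>a\<in>keys p. \<Sum>b\<in>keys q. single (phi_exp a + phi_exp b) (lookup p a * lookup q b))"
    by (simp add: phi_sum phi_single phi_exp_add)
  also have "\<dots> = phi p * phi q"
    by (simp add: phi_eq_sum_single sum_product mult_single)
  finally show ?thesis .
qed

lemma lookup_phi_exp_ge:
  assumes "J \<in> keys m" "finite J" "i \<in> J"
  shows "lookup m J \<le> lookup (phi_exp m) i"
  unfolding lookup_phi_exp
  using member_le_sum[of J "keys m" "\<lambda>J. if finite J \<and> i \<in> J then lookup m J else 0"] assms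
  by simp

lemma in_keys_phi_exp:
  assumes "i \<in> keys (phi_exp m)"
  obtains J where "J \<in> keys m" "i \<in> J"
proof -
  have "(\<Sum>J\<in>keys m. if finite J \<and> i \<in> J then lookup m J else 0) \<noteq> 0"
    using assms by (simp add: in_keys_iff lookup_phi_exp)
  then show ?thesis
    using that by (auto elim!: sum.not_neutral_contains_not_neutral split: if_splits)
qed

lemma phi_exp_eq_0D:
  assumes "phi_exp m = 0" "\<forall>J\<in>keys m. finite J \<and> J \<noteq> {}"
  shows "m = 0"
proof (rule ccontr)
  assume "m \<noteq> 0"
  then obtain J where J: "J \<in> keys m" by fastforce
  then obtain i where "i \<in> J" "finite J" using assms by blast
  then have "lookup m J \<le> lookup (phi_exp m) i" using lookup_phi_exp_ge J by blast
  then show False using J assms(1) by (simp add: in_keys_iff)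
qed

lemma lookup_phi_isolated:
  assumes "m \<in> keys p" "\<And>m'. m' \<in> keys p \<Longrightarrow> phi_exp m' = phi_exp m \<Longrightarrow> m' = m"
  shows "lookup (phi p) (phi_exp m) = lookup p m"
proof -
  have "lookup (phi p) (phi_exp m) = (\<Sum>m'\<in>keys p. if m' = m then lookup p m' else 0)"
    unfolding lookup_phi using assms(2) by (intro sum.cong) auto
  also have "\<dots> = lookup p m" using assms(1) by (simp add: sum.delta')
  finally show ?thesis .
qed

section \<open>The ring S and its ideals\<close>

lemma S_ring_zero: "0 \<in> S_ring n r"
  by (simp add: S_ring_def)

lemma S_ring_add: "p \<in> S_ring n r \<Longrightarrow> q \<in> S_ring n r \<Longrightarrow> p + q \<in> S_ring n r"
  unfolding S_ring_def using keys_add by fastforce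

lemma S_ring_uminus: "p \<in> S_ring n r \<Longrightarrow> - p \<in> S_ring n r"
  unfolding S_ring_def by simp

lemma S_ring_diff: "p \<in> S_ring n r \<Longrightarrow> q \<in> S_ring n r \<Longrightarrow> p - q \<in> S_ring n r"
  using S_ring_add[OF _ S_ring_uminus] by (metis diff_conv_add_uminus)

lemma S_ring_mult:
  assumes "p \<in> S_ring n r" "q \<in> S_ring n r"
  shows "p * q \<in> S_ring n r"
  unfolding S_ring_def
proof (intro CollectI ballI)
  fix m assume "m \<in> keys (p * q)"
  then obtain a b where "m = a + b" "a \<in> keys p" "b \<in> keys q" using keys_mult by blast
  then show "keys m \<subseteq> conn_ideals n r"
    using assms keys_add[of a b] unfolding S_ring_def by blast
qed

lemma single_in_S_ring: "keys m \<subseteq> conn_ideals n r \<Longrightarrow> single m c \<in> S_ring n r"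
  unfolding S_ring_def by auto

lemma S_ring_sum: "(\<And>x. x \<in> A \<Longrightarrow> f x \<in> S_ring n r) \<Longrightarrow> sum f A \<in> S_ring n r"
  by (induction A rule: infinite_finite_induct) (simp_all add: S_ring_add S_ring_zero)

lemma ideal_gen_S_zero: "0 \<in> ideal_gen_S n r G"
  unfolding ideal_gen_S_def by (intro CollectI exI[of _ "{}"]) auto

lemma ideal_gen_S_generator: "g \<in> G \<Longrightarrow> g \<in> ideal_gen_S n r G"
  unfolding ideal_gen_S_def
  using single_in_S_ring[of 0 n r 1] by (intro CollectI exI[of _ "{g}"] exI[of _ "\<lambda>_. 1"]) simp

lemma ideal_gen_S_add:
  assumes "a \<in> ideal_gen_S n r G" "b \<in> ideal_gen_S n r G"
  shows "a + b \<in> ideal_gen_S n r G"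
proof -
  obtain F1 c1 where 1: "a = (\<Sum>g\<in>F1. c1 g * g)" "finite F1" "F1 \<subseteq> G" "\<forall>g\<in>F1. c1 g \<in> S_ring n r"
    using assms(1) unfolding ideal_gen_S_def by blast
  obtain F2 c2 where 2: "b = (\<Sum>g\<in>F2. c2 g * g)" "finite F2" "F2 \<subseteq> G" "\<forall>g\<in>F2. c2 g \<in> S_ring n r"
    using assms(2) unfolding ideal_gen_S_def by blast
  define c where "c g = (if g \<in> F1 then c1 g else 0) + (if g \<in> F2 then c2 g else 0)" for g
  have fin: "finite (F1 \<union> F2)" using 1 2 by simp
  have "a = (\<Sum>g\<in>F1 \<union> F2. (if g \<in> F1 then c1 g else 0) * g)"
    unfolding 1 by (rule sum.mono_neutral_cong_left[OF fin]) auto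
  moreover have "b = (\<Sum>g\<in>F1 \<union> F2. (if g \<in> F2 then c2 g else 0) * g)"
    unfolding 2 by (rule sum.mono_neutral_cong_left[OF fin]) auto
  ultimately have "a + b = (\<Sum>g\<in>F1 \<union> F2. c g * g)"
    unfolding c_def distrib_right sum.distrib by simp
  moreover have "\<forall>g\<in>F1 \<union> F2. c g \<in> S_ring n r"
    using 1 2 by (auto simp: c_def S_ring_add S_ring_zero)
  ultimately show ?thesis
    unfolding ideal_gen_S_def using fin 1 2 by (intro CollectI exI[of _ "F1 \<union> F2"] exI[of _ c]) auto
qed

lemma ideal_gen_S_mult:
  assumes "s \<in> S_ring n r" "a \<in> ideal_gen_S n r G"
  shows "s * a \<in> ideal_gen_S n r G"
proof -
  obtain F c where 1: "a = (\<Sum>g\<in>F. c g * g)" "finite F" "F \<subseteq> G" "\<forall>g\<in>F. c g \<in> S_ring n r"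
    using assms(2) unfolding ideal_gen_S_def by blast
  have "s * a = (\<Sum>g\<in>F. (s * c g) * g)"
    unfolding 1 by (simp add: sum_distrib_left mult.assoc)
  moreover have "\<forall>g\<in>F. s * c g \<in> S_ring n r" using 1 assms(1) S_ring_mult by blast
  ultimately show ?thesis
    unfolding ideal_gen_S_def using 1 by (intro CollectI exI[of _ F] exI[of _ "\<lambda>g. s * c g"]) simp
qed

lemma ideal_gen_S_sum:
  "(\<And>x. x \<in> A \<Longrightarrow> f x \<in> ideal_gen_S n r G) \<Longrightarrow> sum f A \<in> ideal_gen_S n r G"
  by (induction A rule: infinite_finite_induct) (simp_all add: ideal_gen_S_zero ideal_gen_S_add)

lemma ideal_gen_S_subset_I_P:
  assumes "G \<subseteq> I_P n r"
  shows "ideal_gen_S n r G \<subseteq> (I_P n r :: (nat set, 'k::field) mpoly set)"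
proof
  fix p :: "(nat set, 'k) mpoly" assume "p \<in> ideal_gen_S n r G"
  then obtain F c where 1: "p = (\<Sum>g\<in>F. c g * g)" "F \<subseteq> G" "\<forall>g\<in>F. c g \<in> S_ring n r"
    unfolding ideal_gen_S_def by blast
  have "p \<in> S_ring n r"
    unfolding 1 using 1 assms by (intro S_ring_sum S_ring_mult) (auto simp: I_P_def)
  moreover have "phi p = 0"
    unfolding 1 phi_sum phi_mult using 1 assms by (intro sum.neutral) (auto simp: I_P_def)
  ultimately show "p \<in> I_P n r" by (simp add: I_P_def)
qed

section \<open>Connected components of Hasse diagrams\<close>

lemma hasse_adj_sym: "hasse_adj r T x y \<longleftrightarrow> hasse_adj r T y x"
  unfolding hasse_adj_def by blast

lemma hasse_conn_refl: "hasse_conn r T x x"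
  by (simp add: hasse_conn_def)

lemma hasse_conn_sym: "hasse_conn r T x y \<Longrightarrow> hasse_conn r T y x"
  unfolding hasse_conn_def
proof (induction rule: rtranclp_induct)
  case (step y z)
  then show ?case using hasse_adj_sym by (metis converse_rtranclp_into_rtranclp)
qed simp

lemma hasse_conn_trans: "hasse_conn r T x y \<Longrightarrow> hasse_conn r T y z \<Longrightarrow> hasse_conn r T x z"
  unfolding hasse_conn_def by (rule rtranclp_trans)

lemma hasse_conn_mono: "T \<subseteq> T' \<Longrightarrow> hasse_conn r T x y \<Longrightarrow> hasse_conn r T' x y"
  unfolding hasse_conn_def
  by (erule rtranclp_mono[THEN predicate2D, rotated]) (auto simp: hasse_adj_def)

definition hasse_component :: "nat rel \<Rightarrow> nat set \<Rightarrow> nat \<Rightarrow> nat set" where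
  "hasse_component r T x = {y \<in> T. hasse_conn r T x y}"

lemma hasse_component_self: "x \<in> T \<Longrightarrow> x \<in> hasse_component r T x"
  by (simp add: hasse_component_def hasse_conn_refl)

lemma hasse_component_eq: "i \<in> hasse_component r T x \<Longrightarrow> hasse_component r T i = hasse_component r T x"
  unfolding hasse_component_def using hasse_conn_sym hasse_conn_trans by blast

lemma hasse_components_eq_image: "hasse_components r T = hasse_component r T ` T"
  unfolding hasse_components_def hasse_component_def by auto

lemma hasse_components_subset: "C \<in> hasse_components r T \<Longrightarrow> C \<subseteq> T"
  unfolding hasse_components_eq_image hasse_component_def by auto

lemma finite_hasse_components: "finite T \<Longrightarrow> finite (hasse_components r T)"
  unfolding hasse_components_eq_image by simp

lemma hasse_components_unique:
  "C \<in> hasse_components r T \<Longrightarrow> i \<in> C \<Longrightarrow> C = hasse_component r T i"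
  unfolding hasse_components_eq_image using hasse_component_eq by blast

lemma sum_hasse_components_indicator:
  assumes "finite T"
  shows "(\<Sum>C\<in>hasse_components r T. if i \<in> C then (k::nat) else 0) = (if i \<in> T then k else 0)"
proof (cases "i \<in> T")
  case True
  have "(\<Sum>C\<in>hasse_components r T. if i \<in> C then k else 0)
      = (\<Sum>C\<in>{hasse_component r T i}. if i \<in> C then k else 0)"
  proof (rule sum.mono_neutral_right)
    show "finite (hasse_components r T)" using assms by (rule finite_hasse_components)
    show "{hasse_component r T i} \<subseteq> hasse_components r T"
      using True by (simp add: hasse_components_eq_image)
    show "\<forall>C\<in>hasse_components r T - {hasse_component r T i}. (if i \<in> C then k else 0) = 0"
      using hasse_components_unique by auto
  qed
  then show ?thesis using True hasse_component_self by simp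
next
  case False
  then show ?thesis using hasse_components_subset by (fastforce intro!: sum.neutral)
qed

lemma hasse_conn_within_component:
  assumes "hasse_conn r T x y"
  shows "hasse_conn r (hasse_component r T x) x y"
  using assms unfolding hasse_conn_def
proof (induction rule: rtranclp_induct)
  case (step y z)
  have "hasse_conn r T x y" "hasse_conn r T x z"
    using step unfolding hasse_conn_def by auto
  then have "hasse_adj r (hasse_component r T x) y z"
    using step(2) unfolding hasse_adj_def hasse_component_def by auto
  then show ?case using step(3) by (rule rtranclp.rtrancl_into_rtrancl[rotated])
qed simp

lemma hasse_component_connected:
  assumes "y \<in> hasse_component r T x" "z \<in> hasse_component r T x"
  shows "hasse_conn r (hasse_component r T x) y z"
  using assms hasse_conn_within_component hasse_conn_sym hasse_conn_trans
  unfolding hasse_component_def by blast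

section \<open>Connected order ideals of a finite poset\<close>

locale finite_poset =
  fixes n :: nat and r :: "nat rel"
  assumes partial_order: "partial_order_on {1..n} r"
begin

lemma rel_in_ground: "(a, b) \<in> r \<Longrightarrow> a \<in> {1..n} \<and> b \<in> {1..n}"
  using partial_order unfolding partial_order_on_def preorder_on_def by blast

lemma rel_refl: "a \<in> {1..n} \<Longrightarrow> (a, a) \<in> r"
  using partial_order unfolding partial_order_on_def preorder_on_def refl_on_def by blast

lemma rel_trans: "(a, b) \<in> r \<Longrightarrow> (b, c) \<in> r \<Longrightarrow> (a, c) \<in> r"
  using partial_order unfolding partial_order_on_def preorder_on_def trans_def by blast

lemma rel_antisym: "(a, b) \<in> r \<Longrightarrow> (b, a) \<in> r \<Longrightarrow> a = b"
  using partial_order unfolding partial_order_on_def antisym_def by blast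

definition open_interval :: "nat \<Rightarrow> nat \<Rightarrow> nat set" where
  "open_interval p i = {c. strict_lt r p c \<and> strict_lt r c i}"

lemma finite_open_interval: "finite (open_interval p i)"
  by (rule finite_subset[of _ "{1..n}"]) (auto simp: open_interval_def strict_lt_def dest: rel_in_ground)

lemma open_interval_psubset:
  assumes "strict_lt r p k" "strict_lt r k i"
  shows "open_interval p k \<subset> open_interval p i" "open_interval k i \<subset> open_interval p i"
proof -
  have "open_interval p k \<subseteq> open_interval p i" "open_interval k i \<subseteq> open_interval p i"
    using assms rel_trans rel_antisym unfolding open_interval_def strict_lt_def by blast+
  moreover have "k \<in> open_interval p i - open_interval p k" "k \<in> open_interval p i - open_interval k i"
    using assms unfolding open_interval_def strict_lt_def by auto
  ultimately show "open_interval p k \<subset> open_interval p i" "open_interval k i \<subset> open_interval p i"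
    by blast+
qed

text \<open>Refine p < i at points strictly in between until only covering relations are left.\<close>
lemma hasse_conn_if_interval_subset:
  assumes "strict_lt r p i" "\<And>c. (p, c) \<in> r \<Longrightarrow> (c, i) \<in> r \<Longrightarrow> c \<in> T"
  shows "hasse_conn r T p i"
  using assms
proof (induction "card (open_interval p i)" arbitrary: p i rule: less_induct)
  case less
  have ends: "p \<in> T" "i \<in> T"
    using less.prems rel_in_ground rel_refl unfolding strict_lt_def by blast+
  show ?case
  proof (cases "open_interval p i = {}")
    case True
    then have "covers r p i" using less.prems(1) unfolding covers_def open_interval_def by blast
    then show ?thesis using ends by (simp add: hasse_conn_def hasse_adj_def r_into_rtranclp)
  next
    case False
    then obtain k where k: "strict_lt r p k" "strict_lt r k i" unfolding open_interval_def by blast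
    note psub = open_interval_psubset[OF k]
    have "hasse_conn r T p k"
      using less.hyps[OF psubset_card_mono[OF finite_open_interval psub(1)] k(1)]
        less.prems(2) k(2) rel_trans unfolding strict_lt_def by blast
    moreover have "hasse_conn r T k i"
      using less.hyps[OF psubset_card_mono[OF finite_open_interval psub(2)] k(2)]
        less.prems(2) k(1) rel_trans unfolding strict_lt_def by blast
    ultimately show ?thesis by (rule hasse_conn_trans)
  qed
qed

lemma hasse_component_in_conn_ideals:
  assumes "order_ideal n r T" "x \<in> T"
  shows "hasse_component r T x \<in> conn_ideals n r"
proof -
  have "p \<in> hasse_component r T x" if "i \<in> hasse_component r T x" "(p, i) \<in> r" for p i
  proof (cases "p = i")
    case False
    have iT: "i \<in> T" "hasse_conn r T x i" using that(1) unfolding hasse_component_def by auto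
    have "hasse_conn r T p i"
      using that(2) False assms(1) iT(1) unfolding order_ideal_def
      by (intro hasse_conn_if_interval_subset) (auto simp: strict_lt_def)
    then have "hasse_conn r T x p" using iT hasse_conn_sym hasse_conn_trans by blast
    then show ?thesis using assms(1) iT that(2) unfolding hasse_component_def order_ideal_def by blast
  qed (use that in simp)
  moreover have "hasse_component r T x \<subseteq> {1..n}"
    using assms unfolding hasse_component_def order_ideal_def by auto
  ultimately have "order_ideal n r (hasse_component r T x)"
    unfolding order_ideal_def by blast
  moreover have "hasse_component r T x \<noteq> {}" using hasse_component_self[OF assms(2)] by blast
  ultimately show ?thesis using hasse_component_connected unfolding conn_ideals_def by blast
qed

lemma hasse_components_in_conn_ideals:
  "order_ideal n r T \<Longrightarrow> hasse_components r T \<subseteq> conn_ideals n r"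
  using hasse_component_in_conn_ideals unfolding hasse_components_eq_image by blast

lemma conn_ideals_Un:
  assumes "A \<in> conn_ideals n r" "B \<in> conn_ideals n r" "A \<inter> B \<noteq> {}"
  shows "A \<union> B \<in> conn_ideals n r"
proof -
  obtain x where x: "x \<in> A" "x \<in> B" using assms(3) by blast
  have "hasse_conn r (A \<union> B) y z" if "y \<in> A" "z \<in> A" for y z
    using assms(1) that hasse_conn_mono[of A "A \<union> B"] unfolding conn_ideals_def by blast
  moreover have "hasse_conn r (A \<union> B) y z" if "y \<in> B" "z \<in> B" for y z
    using assms(2) that hasse_conn_mono[of B "A \<union> B"] unfolding conn_ideals_def by blast
  ultimately have "hasse_conn r (A \<union> B) y z" if "y \<in> A \<union> B" "z \<in> A \<union> B" for y z
    using that x hasse_conn_trans by blast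
  moreover have "order_ideal n r (A \<union> B)"
    using assms(1,2) unfolding conn_ideals_def order_ideal_def by blast
  ultimately show ?thesis using x by (auto simp: conn_ideals_def)
qed

lemma conn_idealsD:
  assumes "J \<in> conn_ideals n r"
  shows "finite J" "J \<noteq> {}" "J \<subseteq> {1..n}" "order_ideal n r J"
    "\<And>x y. x \<in> J \<Longrightarrow> y \<in> J \<Longrightarrow> hasse_conn r J x y"
  using assms finite_subset[of J "{1..n}"] unfolding conn_ideals_def order_ideal_def by auto

lemma hasse_components_Int_in_conn_ideals:
  "A \<in> conn_ideals n r \<Longrightarrow> B \<in> conn_ideals n r \<Longrightarrow>
    hasse_components r (A \<inter> B) \<subseteq> conn_ideals n r"
  by (intro hasse_components_in_conn_ideals) (auto simp: conn_ideals_def order_ideal_def)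

end

section \<open>The syzygies\<close>

definition syz_lhs :: "nat set \<Rightarrow> nat set \<Rightarrow> (nat set \<Rightarrow>\<^sub>0 nat)" where
  "syz_lhs A B = single A 1 + single B 1"

definition syz_rhs :: "nat rel \<Rightarrow> nat set \<Rightarrow> nat set \<Rightarrow> (nat set \<Rightarrow>\<^sub>0 nat)" where
  "syz_rhs r A B = single (A \<union> B) 1 + (\<Sum>C\<in>hasse_components r (A \<inter> B). single C 1)"

lemma syz_eq_single_diff:
  "(syz r A B :: (nat set, 'k::field) mpoly) = single (syz_lhs A B) 1 - single (syz_rhs r A B) 1"
  unfolding syz_def Uvar_def syz_lhs_def syz_rhs_def by (simp add: mult_single prod_single_one)

lemma syz_commute: "syz r A B = syz r B A"
  unfolding syz_def by (simp add: Un_commute Int_commute mult.commute)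

lemma syz_pair_doubleton: "syz_pair r {A, B} = syz r A B"
  unfolding syz_pair_def
proof (rule someI2[where a = "syz r A B"])
  fix q assume "\<exists>J1 J2. {A, B} = {J1, J2} \<and> q = syz r J1 J2"
  then show "q = syz r A B" using syz_commute by (auto simp: doubleton_eq_iff)
qed blast

lemma lookup_syz_lhs: "lookup (syz_lhs A B) X = (if X = A then 1 else 0) + (if X = B then 1 else 0)"
  by (simp add: syz_lhs_def lookup_add lookup_single when_def)

lemma keys_syz_lhs: "keys (syz_lhs A B) = {A, B}"
  by (auto simp: in_keys_iff lookup_syz_lhs split: if_splits)

lemma lookup_syz_rhs:
  assumes "finite (A \<inter> B)"
  shows "lookup (syz_rhs r A B) X
     = (if X = A \<union> B then 1 else 0) + (if X \<in> hasse_components r (A \<inter> B) then 1 else 0)"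
  using finite_hasse_components[OF assms]
  by (simp add: syz_rhs_def lookup_add lookup_sum lookup_single when_def sum.delta)

lemma keys_syz_rhs:
  assumes "finite (A \<inter> B)"
  shows "keys (syz_rhs r A B) = insert (A \<union> B) (hasse_components r (A \<inter> B))"
  by (auto simp: in_keys_iff lookup_syz_rhs[OF assms] split: if_splits)

lemma phi_exp_syz_rhs:
  assumes "finite A" "finite B"
  shows "phi_exp (syz_rhs r A B) = phi_exp (syz_lhs A B)"
proof (rule poly_mapping_eqI)
  fix i
  have fin: "finite (A \<inter> B)" using assms by simp
  have "lookup (phi_exp (\<Sum>C\<in>hasse_components r (A \<inter> B). single C 1)) i
      = (\<Sum>C\<in>hasse_components r (A \<inter> B). if i \<in> C then 1 else 0)"
    unfolding phi_exp_sum phi_exp_single lookup_sum lookup_indicator_pm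
  proof (rule sum.cong[OF refl])
    fix C assume "C \<in> hasse_components r (A \<inter> B)"
    then have "finite C" using hasse_components_subset finite_subset fin by metis
    then show "(if finite C \<and> i \<in> C then 1 else 0) = (if i \<in> C then 1 else (0::nat))" by simp
  qed
  also have "\<dots> = (if i \<in> A \<inter> B then 1 else 0)"
    by (rule sum_hasse_components_indicator[OF fin])
  finally show "lookup (phi_exp (syz_rhs r A B)) i = lookup (phi_exp (syz_lhs A B)) i"
    using assms
    by (simp add: syz_rhs_def syz_lhs_def phi_exp_add phi_exp_single lookup_add lookup_indicator_pm)
qed

lemma Pi_pairsI:
  "A \<in> conn_ideals n r \<Longrightarrow> B \<in> conn_ideals n r \<Longrightarrow> intersect_nontrivially A B \<Longrightarrow>
    {A, B} \<in> Pi_pairs n r"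
  unfolding Pi_pairs_def by blast

lemma Pi_pairsE:
  assumes "p \<in> Pi_pairs n r"
  obtains A B where "p = {A, B}" "A \<in> conn_ideals n r" "B \<in> conn_ideals n r" "intersect_nontrivially A B"
  using assms unfolding Pi_pairs_def by blast

context finite_poset
begin

lemma keys_syz_rhs_subset:
  assumes "A \<in> conn_ideals n r" "B \<in> conn_ideals n r" "A \<inter> B \<noteq> {}"
  shows "keys (syz_rhs r A B) \<subseteq> conn_ideals n r"
  using assms conn_ideals_Un hasse_components_Int_in_conn_ideals conn_idealsD(1)
  by (subst keys_syz_rhs) auto

lemma syz_in_I_P:
  assumes "A \<in> conn_ideals n r" "B \<in> conn_ideals n r" "intersect_nontrivially A B"
  shows "(syz r A B :: (nat set, 'k::field) mpoly) \<in> I_P n r"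
proof -
  have "keys (syz_lhs A B) \<subseteq> conn_ideals n r" using assms by (simp add: keys_syz_lhs)
  moreover have "keys (syz_rhs r A B) \<subseteq> conn_ideals n r"
    using keys_syz_rhs_subset assms unfolding intersect_nontrivially_def by blast
  moreover have "phi_exp (syz_rhs r A B) = phi_exp (syz_lhs A B)"
    using phi_exp_syz_rhs assms(1,2) conn_idealsD(1) by blast
  ultimately show ?thesis
    unfolding I_P_def syz_eq_single_diff by (simp add: S_ring_diff single_in_S_ring phi_diff phi_single)
qed

lemma syzygies_subset_I_P: "(syz_pair r ` Pi_pairs n r :: (nat set, 'k::field) mpoly set) \<subseteq> I_P n r"
  by (auto elim!: Pi_pairsE simp: syz_pair_doubleton syz_in_I_P)

end

section \<open>Laminar monomials\<close>

lemma total_deg_superset: "finite A \<Longrightarrow> keys m \<subseteq> A \<Longrightarrow> total_deg m = (\<Sum>v\<in>A. lookup m v)"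
  unfolding total_deg_def by (rule sum.mono_neutral_left) (auto simp: in_keys_iff)

lemma total_deg_zero [simp]: "total_deg 0 = 0"
  by (simp add: total_deg_def)

lemma total_deg_add: "total_deg (a + b) = total_deg a + total_deg b"
proof -
  have fin: "finite (keys a \<union> keys b)" by simp
  show ?thesis
    unfolding total_deg_superset[OF fin keys_add] total_deg_superset[OF fin Un_upper1]
      total_deg_superset[OF fin Un_upper2]
    by (simp add: lookup_add sum.distrib)
qed

lemma total_deg_sum: "total_deg (sum f A) = (\<Sum>x\<in>A. total_deg (f x))"
  by (induction A rule: infinite_finite_induct) (simp_all add: total_deg_add)

lemma total_deg_single: "total_deg (single v k) = k"
  by (simp add: total_deg_def)

lemma total_deg_eq_0_iff: "total_deg m = 0 \<longleftrightarrow> m = 0"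
proof
  assume "total_deg m = 0"
  then have "\<forall>v\<in>keys m. lookup m v = 0" by (simp add: total_deg_def)
  then show "m = 0" by (metis in_keys_iff keys_eq_empty ex_in_conv)
qed simp

lemma total_deg_indicator_pm: "finite J \<Longrightarrow> total_deg (indicator_pm J k) = k * card J"
  by (simp add: indicator_pm_def total_deg_sum total_deg_single)

lemma total_deg_phi_exp:
  assumes "\<forall>J\<in>keys m. finite J"
  shows "total_deg (phi_exp m) = (\<Sum>J\<in>keys m. lookup m J * card J)"
  using assms by (simp add: phi_exp_def total_deg_sum total_deg_indicator_pm)

lemma lookup_phi_exp_le_total_deg: "lookup (phi_exp m) i \<le> total_deg m"
  unfolding lookup_phi_exp total_deg_def by (rule sum_mono) auto

lemma subset_keys_phi_exp:
  assumes "J \<in> keys m" "finite J"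
  shows "J \<subseteq> keys (phi_exp m)"
proof
  fix i assume "i \<in> J"
  then have "lookup m J \<le> lookup (phi_exp m) i" using lookup_phi_exp_ge assms by blast
  then show "i \<in> keys (phi_exp m)" using assms(1) by (simp add: in_keys_iff)
qed

lemma minus_single_add_cancel:
  fixes m :: "'a \<Rightarrow>\<^sub>0 nat"
  assumes "D \<in> keys m"
  shows "m - single D 1 + single D 1 = m"
  using assms by (intro poly_mapping_eqI) (auto simp: in_keys_iff lookup_add lookup_minus lookup_single when_def)

lemma keys_minus_single_subset: "keys (m - single D 1) \<subseteq> keys (m :: 'a \<Rightarrow>\<^sub>0 nat)"
  by (auto simp: in_keys_iff lookup_minus)

definition laminar :: "(nat set \<Rightarrow>\<^sub>0 nat) \<Rightarrow> bool" where
  "laminar m \<longleftrightarrow> (\<forall>J\<in>keys m. \<forall>K\<in>keys m. \<not> intersect_nontrivially J K)"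

lemma laminar_subset: "laminar m \<Longrightarrow> keys m' \<subseteq> keys m \<Longrightarrow> laminar m'"
  unfolding laminar_def by blast

definition potential :: "(nat set \<Rightarrow>\<^sub>0 nat) \<Rightarrow> nat" where
  "potential m = (\<Sum>J\<in>keys m. lookup m J * 2 ^ card J)"

lemma potential_superset:
  "finite A \<Longrightarrow> keys m \<subseteq> A \<Longrightarrow> potential m = (\<Sum>J\<in>A. lookup m J * 2 ^ card J)"
  unfolding potential_def by (rule sum.mono_neutral_left) (auto simp: in_keys_iff)

lemma potential_add: "potential (a + b) = potential a + potential b"
proof -
  have fin: "finite (keys a \<union> keys b)" by simp
  show ?thesis
    unfolding potential_superset[OF fin keys_add] potential_superset[OF fin Un_upper1]
      potential_superset[OF fin Un_upper2]
    by (simp add: lookup_add sum.distrib algebra_simps)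
qed

lemma potential_zero [simp]: "potential 0 = 0"
  by (simp add: potential_def)

lemma potential_sum: "potential (sum f A) = (\<Sum>x\<in>A. potential (f x))"
  by (induction A rule: infinite_finite_induct) (simp_all add: potential_add)

lemma potential_single: "potential (single J k) = k * 2 ^ card J"
  by (simp add: potential_def)

text \<open>The exponential weight makes the union A \<union> B alone outweigh A and B.\<close>
lemma potential_syz_lhs_less:
  assumes "finite A" "finite B" "intersect_nontrivially A B"
  shows "potential (syz_lhs A B) < potential (syz_rhs r A B)"
proof -
  define k where "k = card (A \<union> B)"
  have "card A < k" "card B < k"
    using assms by (auto simp: k_def intersect_nontrivially_def intro!: psubset_card_mono)
  then have "(2::nat) ^ card A \<le> 2 ^ (k - 1)" "(2::nat) ^ card B \<le> 2 ^ (k - 1)"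
    by (simp_all add: power_increasing)
  moreover have "(2::nat) ^ k = 2 * 2 ^ (k - 1)" using \<open>card A < k\<close> by (cases k) auto
  ultimately have union: "(2::nat) ^ card A + 2 ^ card B \<le> 2 ^ card (A \<union> B)"
    unfolding k_def by linarith
  obtain x where "x \<in> A \<inter> B" using assms(3) by (auto simp: intersect_nontrivially_def)
  then have "hasse_component r (A \<inter> B) x \<in> hasse_components r (A \<inter> B)"
    by (simp add: hasse_components_eq_image)
  then have "(2::nat) ^ card (hasse_component r (A \<inter> B) x)
      \<le> (\<Sum>C\<in>hasse_components r (A \<inter> B). 2 ^ card C)"
    by (rule member_le_sum) (use assms(1) finite_hasse_components in blast)+
  then have "0 < (\<Sum>C\<in>hasse_components r (A \<inter> B). (2::nat) ^ card C)"
    by (metis less_le_trans zero_less_numeral zero_less_power)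
  then show ?thesis
    using union by (simp add: syz_lhs_def syz_rhs_def potential_add potential_single potential_sum)
qed

context finite_poset
begin

lemma potential_le:
  assumes "keys m \<subseteq> conn_ideals n r"
  shows "potential m \<le> 2 ^ n * total_deg (phi_exp m)"
proof -
  have "lookup m J * 2 ^ card J \<le> 2 ^ n * (lookup m J * card J)" if "J \<in> keys m" for J
  proof -
    have "J \<in> conn_ideals n r" using assms that by blast
    note J = conn_idealsD(1,3,2)[OF this]
    have "(2::nat) ^ card J \<le> 2 ^ n"
      using card_mono[OF _ J(2)] by (intro power_increasing) auto
    also have "\<dots> \<le> 2 ^ n * card J" using J(1,3) by (simp add: Suc_le_eq card_gt_0_iff)
    finally show ?thesis by (metis mult.left_commute mult_le_mono2)
  qed
  then have "potential m \<le> (\<Sum>J\<in>keys m. 2 ^ n * (lookup m J * card J))"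
    unfolding potential_def by (rule sum_mono)
  also have "\<dots> = 2 ^ n * total_deg (phi_exp m)"
    using assms conn_idealsD(1) by (simp add: total_deg_phi_exp sum_distrib_left subset_iff)
  finally show ?thesis .
qed

lemma syzygy_step:
  assumes m: "keys m \<subseteq> conn_ideals n r" and AB: "A \<in> keys m" "B \<in> keys m"
    and nt: "intersect_nontrivially A B"
  obtains m0 m' where "keys m0 \<subseteq> conn_ideals n r" "keys m' \<subseteq> conn_ideals n r"
    "phi_exp m' = phi_exp m" "potential m < potential m'"
    "(single m 1 - single m' 1 :: (nat set, 'k::field) mpoly) = single m0 1 * syz r A B"
proof -
  have AC: "A \<in> conn_ideals n r" and BC: "B \<in> conn_ideals n r" using AB m by auto
  have fin: "finite A" "finite B" using conn_idealsD(1) AC BC by auto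
  define m0 where "m0 = m - syz_lhs A B"
  have m_eq: "m = m0 + syz_lhs A B"
  proof (rule poly_mapping_eqI)
    fix J
    have "A \<noteq> B" using nt by (auto simp: intersect_nontrivially_def)
    then show "lookup m J = lookup (m0 + syz_lhs A B) J"
      using AB by (auto simp: m0_def lookup_add lookup_minus lookup_syz_lhs in_keys_iff)
  qed
  have k0: "keys m0 \<subseteq> conn_ideals n r"
    using m by (auto simp: m0_def in_keys_iff lookup_minus)
  define m' where "m' = m0 + syz_rhs r A B"
  have "keys m' \<subseteq> conn_ideals n r"
    using keys_add[of m0 "syz_rhs r A B"] k0 keys_syz_rhs_subset[OF AC BC] nt
    unfolding m'_def intersect_nontrivially_def by blast
  moreover have "phi_exp m' = phi_exp m"
    unfolding m'_def by (subst m_eq) (simp add: phi_exp_add phi_exp_syz_rhs[OF fin])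
  moreover have "potential m < potential m'"
    unfolding m'_def by (subst m_eq) (simp add: potential_add potential_syz_lhs_less[OF fin nt])
  moreover have "(single m 1 - single m' 1 :: (nat set, 'k) mpoly) = single m0 1 * syz r A B"
    unfolding m'_def syz_eq_single_diff by (subst m_eq) (simp add: right_diff_distrib mult_single)
  ultimately show ?thesis using that k0 by blast
qed

lemma reduce_to_laminar:
  assumes "keys m \<subseteq> conn_ideals n r"
  shows "\<exists>m'. laminar m' \<and> keys m' \<subseteq> conn_ideals n r \<and>
    (single m 1 - single m' 1 :: (nat set, 'k::field) mpoly) \<in> ideal_gen_S n r (syz_pair r ` Pi_pairs n r)"
  using assms
proof (induction "2 ^ n * total_deg (phi_exp m) - potential m" arbitrary: m rule: less_induct)
  case less
  let ?I = "ideal_gen_S n r (syz_pair r ` Pi_pairs n r) :: (nat set, 'k) mpoly set"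
  show ?case
  proof (cases "laminar m")
    case True
    then show ?thesis using less.prems ideal_gen_S_zero by force
  next
    case False
    then obtain A B where AB: "A \<in> keys m" "B \<in> keys m" "intersect_nontrivially A B"
      unfolding laminar_def by blast
    obtain m0 m1 where m1: "keys m0 \<subseteq> conn_ideals n r" "keys m1 \<subseteq> conn_ideals n r"
      "phi_exp m1 = phi_exp m" "potential m < potential m1"
      "(single m 1 - single m1 1 :: (nat set, 'k) mpoly) = single m0 1 * syz r A B"
      using syzygy_step[OF less.prems AB] by blast
    have "potential m1 \<le> 2 ^ n * total_deg (phi_exp m1)" by (rule potential_le[OF m1(2)])
    then obtain m2 where m2: "laminar m2" "keys m2 \<subseteq> conn_ideals n r"
      "(single m1 1 - single m2 1 :: (nat set, 'k) mpoly) \<in> ?I"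
      using less.hyps[OF _ m1(2)] m1(3,4) by fastforce
    have "{A, B} \<in> Pi_pairs n r" using AB less.prems by (intro Pi_pairsI) auto
    then have "(single m0 1 :: (nat set, 'k) mpoly) * syz r A B \<in> ?I"
      by (intro ideal_gen_S_mult single_in_S_ring m1(1) ideal_gen_S_generator)
        (metis image_eqI syz_pair_doubleton)
    then have "(single m 1 - single m1 1 :: (nat set, 'k) mpoly) + (single m1 1 - single m2 1) \<in> ?I"
      using m1(5) m2(3) ideal_gen_S_add by metis
    then show ?thesis using m2(1,2) by auto
  qed
qed

text \<open>Since J0 is maximal in a laminar family of order ideals, a Hasse step within the support of
  phi_exp m can leave J0 neither downwards (J0 is an ideal) nor upwards (any ideal of m containing
  the upper end meets J0, hence lies inside it).\<close>
lemma hasse_conn_support_in_maximal_key: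
  assumes m: "keys m \<subseteq> conn_ideals n r" "laminar m" and J0: "J0 \<in> keys m"
    and max: "\<And>J. J \<in> keys m \<Longrightarrow> J0 \<subseteq> J \<Longrightarrow> J = J0"
    and conn: "hasse_conn r (keys (phi_exp m)) y z" and y: "y \<in> J0"
  shows "z \<in> J0"
  using conn y unfolding hasse_conn_def
proof (induction rule: rtranclp_induct)
  case (step z w)
  have J0I: "order_ideal n r J0" using J0 m(1) conn_idealsD(4) by blast
  have zw: "w \<in> keys (phi_exp m)" "covers r z w \<or> covers r w z" "z \<in> J0"
    using step unfolding hasse_adj_def by auto
  show ?case
  proof (cases "covers r w z")
    case True
    then show ?thesis using J0I zw(3) unfolding order_ideal_def covers_def strict_lt_def by blast
  next
    case False
    then have zw_rel: "(z, w) \<in> r" using zw(2) unfolding covers_def strict_lt_def by blast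
    obtain J where J: "J \<in> keys m" "w \<in> J" using in_keys_phi_exp[OF zw(1)] by blast
    have "z \<in> J" using J zw_rel m(1) conn_idealsD(4) unfolding order_ideal_def by blast
    then have "J0 \<subseteq> J \<or> J \<subseteq> J0"
      using m(2) J J0 zw(3) unfolding laminar_def intersect_nontrivially_def by blast
    then show ?thesis using max J by blast
  qed
qed

lemma laminar_component_in_keys:
  assumes m: "keys m \<subseteq> conn_ideals n r" "laminar m" and x: "x \<in> keys (phi_exp m)"
  shows "hasse_component r (keys (phi_exp m)) x \<in> keys m"
proof -
  obtain J where "J \<in> keys m" "x \<in> J" using in_keys_phi_exp[OF x] by blast
  then obtain J0 where J0: "J0 \<in> keys m" "x \<in> J0"
    and max: "\<And>J. J \<in> keys m \<Longrightarrow> J0 \<subseteq> J \<Longrightarrow> J = J0"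
    using finite_has_maximal2[of "keys m" J] by auto
  have J0C: "J0 \<in> conn_ideals n r" using J0 m(1) by blast
  have "J0 \<subseteq> keys (phi_exp m)" using subset_keys_phi_exp J0(1) conn_idealsD(1)[OF J0C] .
  then have "J0 \<subseteq> hasse_component r (keys (phi_exp m)) x"
    using conn_idealsD(5)[OF J0C J0(2)] hasse_conn_mono unfolding hasse_component_def by blast
  moreover have "hasse_component r (keys (phi_exp m)) x \<subseteq> J0"
    using hasse_conn_support_in_maximal_key[OF m J0(1) max _ J0(2)]
    unfolding hasse_component_def by blast
  ultimately show ?thesis using J0(1) by simp
qed

text \<open>The Hasse component through any point of the support of the common image is an ideal of
  both monomials and can be removed from both.\<close>
lemma laminar_unique:
  assumes "keys m1 \<subseteq> conn_ideals n r" "laminar m1" "keys m2 \<subseteq> conn_ideals n r" "laminar m2"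
    and "phi_exp m1 = phi_exp m2"
  shows "m1 = m2"
  using assms
proof (induction "total_deg (phi_exp m1)" arbitrary: m1 m2 rule: less_induct)
  case less
  have fin_ne: "\<forall>J\<in>keys m. finite J \<and> J \<noteq> {}" if "keys m \<subseteq> conn_ideals n r" for m
    using that conn_idealsD(1,2) by blast
  show ?case
  proof (cases "phi_exp m1 = 0")
    case True
    then show ?thesis using less.prems phi_exp_eq_0D fin_ne by metis
  next
    case False
    then obtain x where x: "x \<in> keys (phi_exp m1)" by fastforce
    define D where "D = hasse_component r (keys (phi_exp m1)) x"
    have D1: "D \<in> keys m1" unfolding D_def using laminar_component_in_keys less.prems x by blast
    have D2: "D \<in> keys m2" unfolding D_def using laminar_component_in_keys less.prems x by simp
    have "finite D" "D \<noteq> {}" using D1 less.prems(1) conn_idealsD(1,2) by auto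
    have phi_exp_split: "phi_exp m = phi_exp (m - single D 1) + indicator_pm D 1"
      if "D \<in> keys m" for m
      using minus_single_add_cancel[OF that] by (metis phi_exp_add phi_exp_single)
    have "total_deg (phi_exp (m1 - single D 1)) < total_deg (phi_exp m1)"
      using phi_exp_split[OF D1] \<open>finite D\<close> \<open>D \<noteq> {}\<close>
      by (simp add: total_deg_add total_deg_indicator_pm card_gt_0_iff)
    moreover have "phi_exp (m1 - single D 1) = phi_exp (m2 - single D 1)"
      using phi_exp_split[OF D1] phi_exp_split[OF D2] less.prems(5) by simp
    ultimately have "m1 - single D 1 = m2 - single D 1"
      using less.hyps keys_minus_single_subset[of m1 D] keys_minus_single_subset[of m2 D]
        less.prems(1-4) laminar_subset by blast
    then show ?thesis using minus_single_add_cancel[OF D1] minus_single_add_cancel[OF D2] by metis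
  qed
qed

end

section \<open>Surjectivity of phi\<close>

context finite_poset
begin

lemma phi_exp_weak_P_partition:
  assumes m: "keys m \<subseteq> conn_ideals n r"
  shows "weak_P_partition n r (phi_exp m)"
  unfolding weak_P_partition_def
proof (intro conjI allI impI)
  show "keys (phi_exp m) \<subseteq> {1..n}"
    using m conn_idealsD(3) by (blast elim: in_keys_phi_exp)
  fix i j assume "strict_lt r i j"
  then have "(i, j) \<in> r" by (simp add: strict_lt_def)
  then have "j \<in> J \<Longrightarrow> i \<in> J" if "J \<in> keys m" for J
    using that m conn_idealsD(4) unfolding order_ideal_def by blast
  then have "(\<Sum>J\<in>keys m. if finite J \<and> j \<in> J then lookup m J else 0)
      \<le> (\<Sum>J\<in>keys m. if finite J \<and> i \<in> J then lookup m J else 0)"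
    by (intro sum_mono) auto
  then show "lookup (phi_exp m) j \<le> lookup (phi_exp m) i" by (simp add: lookup_phi_exp)
qed

lemma weak_P_partition_le:
  "weak_P_partition n r f \<Longrightarrow> (i, j) \<in> r \<Longrightarrow> lookup f j \<le> lookup f i"
  unfolding weak_P_partition_def strict_lt_def by (cases "i = j") auto

lemma order_ideal_keys:
  assumes "weak_P_partition n r f"
  shows "order_ideal n r (keys f)"
  unfolding order_ideal_def
proof (intro conjI allI impI)
  show "keys f \<subseteq> {1..n}" using assms unfolding weak_P_partition_def by blast
  fix p i assume "i \<in> keys f \<and> (p, i) \<in> r"
  then show "p \<in> keys f" using weak_P_partition_le[OF assms, of p i] by (auto simp: in_keys_iff)
qed

text \<open>If j lies above a point of D but outside D, then f j = 0: otherwise the whole interval up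
  to j lies in the support of f, which would connect j to D.\<close>
lemma weak_P_partition_minus_component:
  assumes w: "weak_P_partition n r f" and x: "x \<in> keys f"
  defines "D \<equiv> hasse_component r (keys f) x"
  shows "weak_P_partition n r (f - indicator_pm D 1)"
  unfolding weak_P_partition_def
proof (intro conjI allI impI)
  have D: "finite D" "order_ideal n r D" "D \<subseteq> keys f"
    using hasse_component_in_conn_ideals[OF order_ideal_keys[OF w] x] conn_idealsD
    unfolding D_def hasse_component_def by auto
  have lookup_minus_D: "lookup (f - indicator_pm D 1) i = lookup f i - (if i \<in> D then 1 else 0)" for i
    using D(1) by (simp add: lookup_minus lookup_indicator_pm)
  have "keys (f - indicator_pm D 1) \<subseteq> keys f" by (auto simp: in_keys_iff lookup_minus)
  then show "keys (f - indicator_pm D 1) \<subseteq> {1..n}" using w unfolding weak_P_partition_def by blast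
  fix i j assume ij: "strict_lt r i j"
  then have rij: "(i, j) \<in> r" by (simp add: strict_lt_def)
  have mono: "lookup f j \<le> lookup f i" using weak_P_partition_le[OF w rij] .
  show "lookup (f - indicator_pm D 1) j \<le> lookup (f - indicator_pm D 1) i"
  proof (cases "j \<in> D \<or> lookup f j = 0")
    case True
    then show ?thesis
      using D(2) rij mono unfolding lookup_minus_D order_ideal_def by auto
  next
    case False
    have "i \<notin> D"
    proof
      assume "i \<in> D"
      moreover have "hasse_conn r (keys f) i j"
      proof (rule hasse_conn_if_interval_subset[OF ij])
        fix c assume "(c, j) \<in> r"
        then have "lookup f j \<le> lookup f c" by (rule weak_P_partition_le[OF w])
        then show "c \<in> keys f" using False by (simp add: in_keys_iff)
      qed
      ultimately have "hasse_conn r (keys f) x j"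
        using hasse_conn_trans unfolding D_def hasse_component_def by blast
      moreover have "j \<in> keys f" using False by (simp add: in_keys_iff)
      ultimately have "j \<in> D" unfolding D_def hasse_component_def by blast
      then show False using False by blast
    qed
    then show ?thesis using False mono unfolding lookup_minus_D by simp
  qed
qed

lemma weak_P_partition_imp_phi_exp:
  assumes "weak_P_partition n r f"
  shows "\<exists>m. keys m \<subseteq> conn_ideals n r \<and> phi_exp m = f"
  using assms
proof (induction "total_deg f" arbitrary: f rule: less_induct)
  case less
  show ?case
  proof (cases "f = 0")
    case True
    then show ?thesis by (intro exI[of _ 0]) simp
  next
    case False
    then obtain x where x: "x \<in> keys f" by fastforce
    define D where "D = hasse_component r (keys f) x"
    have DC: "D \<in> conn_ideals n r"
      unfolding D_def using hasse_component_in_conn_ideals[OF order_ideal_keys[OF less.prems] x] .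
    have "D \<subseteq> keys f" by (simp add: D_def hasse_component_def)
    have nz: "lookup f i \<noteq> 0" if "i \<in> D" for i
      using that \<open>D \<subseteq> keys f\<close> by (auto simp: in_keys_iff)
    define f' where "f' = f - indicator_pm D 1"
    have f_eq: "f = f' + indicator_pm D 1"
    proof (rule poly_mapping_eqI)
      fix i
      show "lookup f i = lookup (f' + indicator_pm D 1) i"
        using nz[of i] conn_idealsD(1)[OF DC]
        by (cases "i \<in> D") (simp_all add: f'_def lookup_add lookup_minus lookup_indicator_pm)
    qed
    have "total_deg f' < total_deg f"
      using conn_idealsD(1,2)[OF DC]
      by (simp add: f_eq total_deg_add total_deg_indicator_pm card_gt_0_iff)
    then obtain m where m: "keys m \<subseteq> conn_ideals n r" "phi_exp m = f'"
      using less.hyps weak_P_partition_minus_component[OF less.prems x] unfolding D_def f'_def by blast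
    have "keys (m + single D 1) \<subseteq> conn_ideals n r" using keys_add[of m "single D 1"] m(1) DC by auto
    moreover have "phi_exp (m + single D 1) = f"
      using m(2) f_eq by (simp add: phi_exp_add phi_exp_single)
    ultimately show ?thesis by blast
  qed
qed

lemma phi_S_ring_subset_R_P: "phi ` S_ring n r \<subseteq> (R_P n r :: (nat, 'k::field) mpoly set)"
proof
  fix y :: "(nat, 'k) mpoly" assume "y \<in> phi ` S_ring n r"
  then obtain p where p: "p \<in> S_ring n r" "y = phi p" by blast
  have "keys y \<subseteq> phi_exp ` keys p"
  proof
    fix e assume "e \<in> keys y"
    then have "(\<Sum>m\<in>keys p. if phi_exp m = e then lookup p m else 0) \<noteq> 0"
      by (simp add: p(2) in_keys_iff lookup_phi)
    then obtain m where "m \<in> keys p" "(if phi_exp m = e then lookup p m else 0) \<noteq> 0"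
      by (rule sum.not_neutral_contains_not_neutral)
    then show "e \<in> phi_exp ` keys p" by (auto split: if_splits)
  qed
  then have "y = (\<Sum>f\<in>phi_exp ` keys p. single f (lookup y f))"
    using sum_single_lookup_superset[OF finite_imageI[OF finite_keys]] by metis
  moreover have "phi_exp ` keys p \<subseteq> {f. weak_P_partition n r f}"
    using p(1) phi_exp_weak_P_partition unfolding S_ring_def by blast
  ultimately show "y \<in> R_P n r"
    unfolding R_P_def by (intro CollectI exI[of _ "phi_exp ` keys p"] exI[of _ "lookup y"]) simp
qed

lemma R_P_subset_phi_S_ring: "(R_P n r :: (nat, 'k::field) mpoly set) \<subseteq> phi ` S_ring n r"
proof
  fix y :: "(nat, 'k) mpoly" assume "y \<in> R_P n r"
  then obtain F c where y: "y = (\<Sum>f\<in>F. single f (c f))" "F \<subseteq> {f. weak_P_partition n r f}"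
    unfolding R_P_def by blast
  have "\<forall>f\<in>F. \<exists>m. keys m \<subseteq> conn_ideals n r \<and> phi_exp m = f"
    using weak_P_partition_imp_phi_exp y(2) by blast
  then obtain mon where mon: "\<forall>f\<in>F. keys (mon f) \<subseteq> conn_ideals n r \<and> phi_exp (mon f) = f"
    by (rule bchoice[elim_format]) blast
  define p where "p = (\<Sum>f\<in>F. single (mon f) (c f))"
  have "p \<in> S_ring n r" unfolding p_def using mon by (intro S_ring_sum single_in_S_ring) blast
  moreover have "phi p = y"
    unfolding p_def phi_sum phi_single y(1) using mon by (intro sum.cong) auto
  ultimately show "y \<in> phi ` S_ring n r" by blast
qed

end

section \<open>The kernel of phi\<close>

lemma laminar_if_lookup_phi_exp_le_1:
  assumes fin: "\<forall>J\<in>keys m. finite J" and le1: "\<forall>i. lookup (phi_exp m) i \<le> 1"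
  shows "laminar m"
  unfolding laminar_def
proof (intro ballI notI)
  fix J K assume JK: "J \<in> keys m" "K \<in> keys m" "intersect_nontrivially J K"
  then have "J \<noteq> K" and "J \<inter> K \<noteq> {}" unfolding intersect_nontrivially_def by auto
  then obtain i where i: "i \<in> J" "i \<in> K" by blast
  have "(\<Sum>X\<in>{J, K}. if finite X \<and> i \<in> X then lookup m X else 0)
      \<le> (\<Sum>X\<in>keys m. if finite X \<and> i \<in> X then lookup m X else 0)"
    by (rule sum_mono2) (use JK in auto)
  then have "lookup m J + lookup m K \<le> lookup (phi_exp m) i"
    using \<open>J \<noteq> K\<close> i fin JK by (simp add: lookup_phi_exp)
  moreover have "lookup m J \<noteq> 0" "lookup m K \<noteq> 0" using JK by (auto simp: in_keys_iff)
  ultimately show False using le1[rule_format, of i] by linarith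
qed

context finite_poset
begin

lemma phi_eq_0_imp_laminar_zero:
  assumes "\<forall>w\<in>keys q. laminar w \<and> keys w \<subseteq> conn_ideals n r" and "phi q = 0"
  shows "q = 0"
proof (rule ccontr)
  assume "q \<noteq> 0"
  then obtain w where w: "w \<in> keys q" by fastforce
  have "lookup (phi q) (phi_exp w) = lookup q w"
    using w assms(1) laminar_unique by (intro lookup_phi_isolated) blast+
  then show False using assms(2) w by (simp add: in_keys_iff)
qed

lemma I_P_subset_ideal_gen_syzygies:
  "(I_P n r :: (nat set, 'k::field) mpoly set) \<subseteq> ideal_gen_S n r (syz_pair r ` Pi_pairs n r)"
proof
  let ?I = "ideal_gen_S n r (syz_pair r ` Pi_pairs n r) :: (nat set, 'k) mpoly set"
  fix p :: "(nat set, 'k) mpoly" assume "p \<in> I_P n r"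
  then have pS: "p \<in> S_ring n r" and p0: "phi p = 0" by (auto simp: I_P_def)
  have "\<forall>m\<in>keys p. \<exists>m'. laminar m' \<and> keys m' \<subseteq> conn_ideals n r \<and>
      (single m 1 - single m' 1 :: (nat set, 'k) mpoly) \<in> ?I"
    using pS reduce_to_laminar unfolding S_ring_def by blast
  then obtain lam where lam: "\<forall>m\<in>keys p. laminar (lam m) \<and> keys (lam m) \<subseteq> conn_ideals n r \<and>
      (single m 1 - single (lam m) 1 :: (nat set, 'k) mpoly) \<in> ?I"
    by (rule bchoice[elim_format]) blast
  define q where "q = (\<Sum>m\<in>keys p. single (lam m) (lookup p m))"
  have "p - q = (\<Sum>m\<in>keys p. single 0 (lookup p m) * (single m 1 - single (lam m) 1))"
    unfolding q_def
    by (subst (1) sum_single_lookup[of p, symmetric]) (simp add: sum_subtractf right_diff_distrib mult_single)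
  also have "\<dots> \<in> ?I"
    using lam by (intro ideal_gen_S_sum ideal_gen_S_mult single_in_S_ring) auto
  finally have pq: "p - q \<in> ?I" .
  then have "phi q = 0"
    using ideal_gen_S_subset_I_P[OF syzygies_subset_I_P] p0 by (auto simp: I_P_def phi_diff)
  moreover have "\<forall>w\<in>keys q. laminar w \<and> keys w \<subseteq> conn_ideals n r"
  proof
    fix w assume "w \<in> keys q"
    then obtain m where "m \<in> keys p" "w \<in> keys (single (lam m) (lookup p m))"
      using keys_sum[of "\<lambda>m. single (lam m) (lookup p m)" "keys p"] unfolding q_def by blast
    then have "m \<in> keys p" "w = lam m" by (simp_all split: if_splits)
    then show "laminar w \<and> keys w \<subseteq> conn_ideals n r" using lam by simp
  qed
  ultimately have "q = 0" using phi_eq_0_imp_laminar_zero by blast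
  then show "p \<in> ?I" using pq by simp
qed

text \<open>A monomial of degree at most one is the only monomial with its image, as all monomials with
  that image are laminar.\<close>
lemma I_P_total_deg_ge_2:
  assumes p: "p \<in> (I_P n r :: (nat set, 'k::field) mpoly set)" and m: "m \<in> keys p"
  shows "2 \<le> total_deg m"
proof (rule ccontr)
  assume "\<not> 2 \<le> total_deg m"
  then have le1: "lookup (phi_exp m) i \<le> 1" for i
    using lookup_phi_exp_le_total_deg[of m i] by linarith
  have keys_p: "keys m' \<subseteq> conn_ideals n r" if "m' \<in> keys p" for m'
    using p that unfolding I_P_def S_ring_def by blast
  have lam: "laminar m'" if "m' \<in> keys p" "phi_exp m' = phi_exp m" for m'
  proof (rule laminar_if_lookup_phi_exp_le_1)
    show "\<forall>J\<in>keys m'. finite J" using keys_p[OF that(1)] conn_idealsD(1) by blast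
    show "\<forall>i. lookup (phi_exp m') i \<le> 1" using le1 that(2) by simp
  qed
  have "lookup (phi p) (phi_exp m) = lookup p m"
  proof (rule lookup_phi_isolated[OF m])
    fix m' assume m': "m' \<in> keys p" "phi_exp m' = phi_exp m"
    show "m' = m" using laminar_unique[OF keys_p[OF m'(1)] lam[OF m'] keys_p[OF m] lam[OF m refl] m'(2)] .
  qed
  then show False using p m by (simp add: I_P_def in_keys_iff)
qed

end

section \<open>Minimality of the syzygies\<close>

lemma lookup_mult_total_deg_2:
  assumes M: "total_deg M = 2" and g: "\<forall>b\<in>keys g. 2 \<le> total_deg b"
  shows "lookup (c * g) M = lookup c 0 * lookup g M"
proof -
  have "c * g = (\<Sum>a\<in>keys c. \<Sum>b\<in>keys g. single (a + b) (lookup c a * lookup g b))"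
    by (subst (1 2) sum_single_lookup[symmetric]) (simp add: sum_product mult_single)
  then have "lookup (c * g) M
      = (\<Sum>a\<in>keys c. \<Sum>b\<in>keys g. if a + b = M then lookup c a * lookup g b else 0)"
    by (simp add: lookup_sum lookup_single when_def)
  also have "\<dots> = (\<Sum>a\<in>keys c.
      if a = 0 then (\<Sum>b\<in>keys g. if b = M then lookup c a * lookup g b else 0) else 0)"
  proof (intro sum.cong refl)
    fix a assume a: "a \<in> keys c"
    have "a = 0" if "b \<in> keys g" "a + b = M" for b
      using that g M total_deg_add[of a b] total_deg_eq_0_iff[of a] by fastforce
    then show "(\<Sum>b\<in>keys g. if a + b = M then lookup c a * lookup g b else 0)
        = (if a = 0 then (\<Sum>b\<in>keys g. if b = M then lookup c a * lookup g b else 0) else 0)"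
      by (auto intro!: sum.neutral)
  qed
  also have "\<dots> = lookup c 0 * lookup g M"
    by (simp add: sum.delta in_keys_iff)
  finally show ?thesis .
qed

lemma total_deg_syz_lhs: "A \<noteq> B \<Longrightarrow> total_deg (syz_lhs A B) = 2"
  by (simp add: total_deg_def keys_syz_lhs lookup_syz_lhs)

lemma syz_rhs_ne_syz_lhs:
  assumes "finite K1" "finite K2" "intersect_nontrivially K1 K2" "intersect_nontrivially J1 J2"
  shows "syz_rhs r K1 K2 \<noteq> syz_lhs J1 J2"
proof
  assume eq: "syz_rhs r K1 K2 = syz_lhs J1 J2"
  have fin: "finite (K1 \<inter> K2)" using assms(1) by simp
  obtain x where "x \<in> K1 \<inter> K2" using assms(3) unfolding intersect_nontrivially_def by blast
  then have C: "hasse_component r (K1 \<inter> K2) x \<in> hasse_components r (K1 \<inter> K2)"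
    by (simp add: hasse_components_eq_image)
  have "keys (syz_rhs r K1 K2) = {J1, J2}" by (simp only: eq keys_syz_lhs)
  moreover have "K1 \<union> K2 \<in> keys (syz_rhs r K1 K2)"
    "hasse_component r (K1 \<inter> K2) x \<in> keys (syz_rhs r K1 K2)"
    using C by (simp_all add: keys_syz_rhs[OF fin])
  ultimately have "K1 \<union> K2 \<in> {J1, J2}" "hasse_component r (K1 \<inter> K2) x \<in> {J1, J2}"
    by simp_all
  moreover have "hasse_component r (K1 \<inter> K2) x \<subset> K1 \<union> K2"
    using hasse_components_subset[OF C] assms(3) unfolding intersect_nontrivially_def by blast
  ultimately show False using assms(4) unfolding intersect_nontrivially_def by blast
qed

lemma lookup_syz:
  "lookup (syz r K1 K2 :: (nat set, 'k::field) mpoly) M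
     = (if syz_lhs K1 K2 = M then 1 else 0) - (if syz_rhs r K1 K2 = M then 1 else 0)"
  by (simp add: syz_eq_single_diff lookup_minus lookup_single when_def)

lemma lookup_syz_syz_lhs:
  assumes "finite K1" "finite K2" "intersect_nontrivially K1 K2" "intersect_nontrivially J1 J2"
  shows "lookup (syz r K1 K2 :: (nat set, 'k::field) mpoly) (syz_lhs J1 J2)
    = (if {K1, K2} = {J1, J2} then 1 else 0)"
proof -
  have "syz_lhs K1 K2 = syz_lhs J1 J2 \<longleftrightarrow> {K1, K2} = {J1, J2}"
    by (metis keys_syz_lhs doubleton_eq_iff syz_lhs_def add.commute)
  then show ?thesis using syz_rhs_ne_syz_lhs[OF assms] by (simp add: lookup_syz)
qed

context finite_poset
begin

lemma inj_on_syz_pair: "inj_on (syz_pair r :: nat set set \<Rightarrow> (nat set, 'k::field) mpoly) (Pi_pairs n r)"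
proof (rule inj_onI)
  fix p1 p2 assume p1: "p1 \<in> Pi_pairs n r" and p2: "p2 \<in> Pi_pairs n r"
    and eq: "(syz_pair r p1 :: (nat set, 'k) mpoly) = syz_pair r p2"
  obtain A B where AB: "p1 = {A, B}" "A \<in> conn_ideals n r" "B \<in> conn_ideals n r" "intersect_nontrivially A B"
    using p1 by (rule Pi_pairsE)
  obtain C D where CD: "p2 = {C, D}" "C \<in> conn_ideals n r" "D \<in> conn_ideals n r" "intersect_nontrivially C D"
    using p2 by (rule Pi_pairsE)
  have "lookup (syz r A B :: (nat set, 'k) mpoly) (syz_lhs A B) = lookup (syz r C D :: (nat set, 'k) mpoly) (syz_lhs A B)"
    using eq AB(1) CD(1) by (simp add: syz_pair_doubleton)
  then show "p1 = p2"
    using AB CD conn_idealsD(1) by (simp add: lookup_syz_syz_lhs split: if_splits)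
qed

text \<open>The coefficient of U_A U_B vanishes on the ideal generated by the other syzygies, as their
  coefficients contribute only through their constant terms.\<close>
lemma ideal_gen_proper_subset_syzygies_ne_I_P:
  assumes sub: "G' \<subset> (syz_pair r ` Pi_pairs n r :: (nat set, 'k::field) mpoly set)"
  shows "ideal_gen_S n r G' \<noteq> I_P n r"
proof
  assume IG: "ideal_gen_S n r G' = I_P n r"
  obtain p0 where p0: "p0 \<in> Pi_pairs n r" "syz_pair r p0 \<notin> G'" using sub by blast
  obtain A B where AB: "p0 = {A, B}" "A \<in> conn_ideals n r" "B \<in> conn_ideals n r" "intersect_nontrivially A B"
    using p0(1) by (rule Pi_pairsE)
  have "syz_pair r p0 \<in> ideal_gen_S n r G'"
    using IG syzygies_subset_I_P p0(1) by blast
  then obtain F c where F: "syz_pair r p0 = (\<Sum>g\<in>F. c g * g)" "F \<subseteq> G'"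
    unfolding ideal_gen_S_def by blast
  have deg2: "total_deg (syz_lhs A B) = 2"
    using AB(4) by (intro total_deg_syz_lhs) (auto simp: intersect_nontrivially_def)
  have "lookup (c g * g) (syz_lhs A B) = 0" if gF: "g \<in> F" for g
  proof -
    obtain p where p: "p \<in> Pi_pairs n r" "g = syz_pair r p" using gF F(2) sub by blast
    obtain C D where CD: "p = {C, D}" "C \<in> conn_ideals n r" "D \<in> conn_ideals n r" "intersect_nontrivially C D"
      using p(1) by (rule Pi_pairsE)
    have "g \<in> I_P n r" using p syzygies_subset_I_P by blast
    then have "\<forall>b\<in>keys g. 2 \<le> total_deg b" using I_P_total_deg_ge_2 by blast
    then have "lookup (c g * g) (syz_lhs A B) = lookup (c g) 0 * lookup g (syz_lhs A B)"
      by (rule lookup_mult_total_deg_2[OF deg2])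
    moreover have "p \<noteq> p0" using gF F(2) p(2) p0(2) by blast
    ultimately show ?thesis
      using p(2) CD AB conn_idealsD(1) by (auto simp: syz_pair_doubleton lookup_syz_syz_lhs)
  qed
  then have "lookup (syz_pair r p0 :: (nat set, 'k) mpoly) (syz_lhs A B) = 0"
    unfolding F(1) lookup_sum by simp
  moreover have "lookup (syz_pair r p0 :: (nat set, 'k) mpoly) (syz_lhs A B) = 1"
    using AB conn_idealsD(1) by (simp add: syz_pair_doubleton lookup_syz_syz_lhs)
  ultimately show False by simp
qed

end

theorem theorem1p2:
  fixes n :: nat and r :: "nat rel"
  assumes "partial_order_on {1..n} r"
  shows "phi ` S_ring n r = (R_P n r :: (nat, 'k::field) mpoly set)
       \<and> (\<forall>p \<in> (I_P n r :: (nat set, 'k) mpoly set). \<forall>m \<in> Poly_Mapping.keys p. 2 \<le> total_deg m)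
       \<and> inj_on (syz_pair r :: nat set set \<Rightarrow> (nat set, 'k) mpoly) (Pi_pairs n r)
       \<and> minimal_gen_set n r (syz_pair r ` Pi_pairs n r) (I_P n r :: (nat set, 'k) mpoly set)"
proof -
  interpret finite_poset n r by (rule finite_poset.intro) (fact assms)
  have "ideal_gen_S n r (syz_pair r ` Pi_pairs n r) = (I_P n r :: (nat set, 'k) mpoly set)"
    using ideal_gen_S_subset_I_P[OF syzygies_subset_I_P] I_P_subset_ideal_gen_syzygies by blast
  then show ?thesis
    using phi_S_ring_subset_R_P R_P_subset_phi_S_ring I_P_total_deg_ge_2 inj_on_syz_pair syzygies_subset_I_P
      ideal_gen_proper_subset_syzygies_ne_I_P
    unfolding minimal_gen_set_def by blast
qed

end
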